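(* Assume product-form weights $w^t_i=u(i)v(m_t)$. For each $t\ge1$ let $c_t\in[1,2]$ and set $\beta^c_t:=\beta^*_t/c_t$, with $\beta^c_0=\beta^*_0\in(0,\infty)$. Then for every $x_{1:n}\in\mathcal X^n$ ($n\ge1$), $$R^{\vec\beta^c}_S(x_{1:n}) \le R^{\vec\beta^*}_S(x_{1:n}) + (m-1)\ln2 ,$$ and hence $$R^{\vec\beta^c}_S(x_{1:n}) \le \mathrm{CL}_w(\mathcal A) - (m-1)\ln m + \sum_{j\in\mathcal A}\tfrac12\ln n_j - \tfrac12\ln n + \tfrac32 m\ln\ln\frac{2n}{m} + 2.33m + 0.86 + (m-1)\ln 2.$$
   Context: Let $\mathcal X$ be a finite base alphabet. For $x_{1:n}\in\mathcal X^n$, $n_i$ is the number of occurrences of $i$, $\mathcal A=\{x_1,\dots,x_n\}$, $m=|\mathcal A|$; for $0\le t\le n$, $\mathcal A_t=\{x_1,\dots,x_t\}$ ($\mathcal A_0=\emptyset$), $m_t=|\mathcal A_t|$, $n^t_i$ the count of $i$ in $x_{1:t}$. Product-form weights: $u:\mathcal X\to(0,\infty)$, $v:\{0,1,\dots\}\to(0,\infty)$ with $w^t_i:=u(i)v(m_t)$ and $\sum_{k\in\mathcal X\setminus\mathcal A_t}w^t_k\le1$. For a sequence $\vec\beta=(\beta_0,\beta_1,\dots)$ of positive reals, $S^{\vec\beta}(x_{t+1}=i\mid x_{1:t})=n^t_i/(t+\beta_t)$ if $n^t_i>0$ and $\beta_t w^t_i/(t+\beta_t)$ if $n^t_i=0$,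 $S^{\vec\beta}(x_{1:n})=\prod_{t=0}^{n-1}S^{\vec\beta}(x_{t+1}\mid x_{1:t})$, and $R^{\vec\beta}_S(x_{1:n}):=\ln\big(n^{-n}\prod_{j\in\mathcal A}n_j^{n_j}\big)-\ln S^{\vec\beta}(x_{1:n})$. $\vec\beta^*$ is given by $\beta^*_t:=m_t/\ln\frac{t+1}{m_t}$ for $t\ge1$ and any $\beta^*_0\in(0,\infty)$. $\mathrm{CL}_w(\mathcal A):=\sum_{t\in\{0,\dots,n-1\}:\,x_{t+1}\notin\mathcal A_t}\ln(1/w^t_{x_{t+1}})$. Natural logarithms. *)

theory Defs
  imports Complex_Main
begin

text \<open>A sequence x_1..x_n is a list xs of length n; x_(t+1) = xs ! t.
  A_t = set (take t xs), m_t = card A_t, n^t_i = count_list (take t xs) i.\<close>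

definition cnt :: "'a list \<Rightarrow> nat \<Rightarrow> 'a \<Rightarrow> nat" where
  "cnt xs t i = count_list (take t xs) i"

definition m_t :: "'a list \<Rightarrow> nat \<Rightarrow> nat" where
  "m_t xs t = card (set (take t xs))"

definition wt :: "('a \<Rightarrow> real) \<Rightarrow> (nat \<Rightarrow> real) \<Rightarrow> 'a list \<Rightarrow> nat \<Rightarrow> 'a \<Rightarrow> real" where
  "wt u v xs t i = u i * v (m_t xs t)"

definition S_cond :: "(nat \<Rightarrow> real) \<Rightarrow> ('a \<Rightarrow> real) \<Rightarrow> (nat \<Rightarrow> real) \<Rightarrow> 'a list \<Rightarrow> nat \<Rightarrow> 'a \<Rightarrow> real" where
  "S_cond \<beta> u v xs t i =
     (if cnt xs t i > 0 then real (cnt xs t i) / (real t + \<beta> t)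
      else \<beta> t * wt u v xs t i / (real t + \<beta> t))"

definition S_seq :: "(nat \<Rightarrow> real) \<Rightarrow> ('a \<Rightarrow> real) \<Rightarrow> (nat \<Rightarrow> real) \<Rightarrow> 'a list \<Rightarrow> real" where
  "S_seq \<beta> u v xs = (\<Prod>t<length xs. S_cond \<beta> u v xs t (xs ! t))"

definition regret :: "(nat \<Rightarrow> real) \<Rightarrow> ('a \<Rightarrow> real) \<Rightarrow> (nat \<Rightarrow> real) \<Rightarrow> 'a list \<Rightarrow> real" where
  "regret \<beta> u v xs =
     ln ((\<Prod>j\<in>set xs. real (count_list xs j) ^ count_list xs j) / real (length xs) ^ length xs)
     - ln (S_seq \<beta> u v xs)"

definition beta_star :: "real \<Rightarrow> 'a list \<Rightarrow> nat \<Rightarrow> real" where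
  "beta_star b0 xs t =
     (if t = 0 then b0 else real (m_t xs t) / ln (real (t + 1) / real (m_t xs t)))"

definition beta_c :: "real \<Rightarrow> (nat \<Rightarrow> real) \<Rightarrow> 'a list \<Rightarrow> nat \<Rightarrow> real" where
  "beta_c b0 c xs t = (if t = 0 then b0 else beta_star b0 xs t / c t)"

definition CL :: "('a \<Rightarrow> real) \<Rightarrow> (nat \<Rightarrow> real) \<Rightarrow> 'a list \<Rightarrow> real" where
  "CL u v xs = (\<Sum>t\<in>{t. t < length xs \<and> xs ! t \<notin> set (take t xs)}.
                   ln (1 / wt u v xs t (xs ! t)))"

end

theory Submission
  imports Defs "HOL-Analysis.Harmonic_Numbers"
begin

text \<open>
  Shrinking \<open>\<beta>\<^sub>t\<close> by a factor \<open>c\<^sub>t \<in> [1,2]\<close> only helps at times where a seen symbol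
  is predicted and loses at most a factor 2 at the \<open>m - 1\<close> times \<open>t \<ge> 1\<close> where a new symbol
  appears; this gives the first inequality.

  For \<open>\<beta>\<^sup>*\<close> one maintains, along the sequence, the invariant that the regret of the prefix
  \<open>x\<^sub>1\<^sub>:\<^sub>t\<close> is at most the code length of the symbols introduced so far, plus
  \<open>\<Sum>\<^sub>j (ln n\<^sup>t\<^sub>j / 2 - 1 / (12 n\<^sup>t\<^sub>j)) - ln t / 2\<close>, plus a potential \<open>\<Psi>(m\<^sub>t, t)\<close>.
  Robbins' sharpening of Stirling's formula, \<open>(c + 1/2) ln (1 + 1/c) \<le> 1 + (1/c - 1/(c+1))/12\<close>,
  accounts for the growth of the maximum-likelihood term, and what remains at each step is a
  one-variable inequality that the potential
  \<open>\<Psi>(k, t) = - ln (k-1)! + k H(t/k) + 3/2\<close> with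
  \<open>H(x) = 3/2 ln ln (2x) + 1/10 + (x-1) ln (1 + 6/(5(x-1)))\<close> absorbs by concavity of \<open>H\<close>.
  Stirling's lower bound for \<open>ln (m-1)!\<close> finally turns \<open>\<Psi>(m, n)\<close> into the stated closed form.
\<close>

lemma m_t_le: "m_t xs t \<le> t"
  using card_length[of "take t xs"] by (simp add: m_t_def)

lemma m_t_pos:
  assumes "xs \<noteq> []" "1 \<le> t"
  shows "1 \<le> m_t xs t"
proof -
  have "take t xs \<noteq> []" using assms by (cases xs; cases t) auto
  then show ?thesis by (simp add: m_t_def Suc_le_eq card_gt_0_iff)
qed

lemma m_t_Suc:
  "t < length xs \<Longrightarrow> m_t xs (Suc t) = m_t xs t + (if xs ! t \<in> set (take t xs) then 0 else 1)"
  by (simp add: m_t_def take_Suc_conv_app_nth insert_absorb)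

lemma cnt_Suc:
  "t < length xs \<Longrightarrow> cnt xs (Suc t) j = cnt xs t j + (if j = xs ! t then 1 else 0)"
  by (simp add: cnt_def take_Suc_conv_app_nth)

lemma cnt_eq_0_iff: "cnt xs t j = 0 \<longleftrightarrow> j \<notin> set (take t xs)"
  by (simp add: cnt_def count_list_0_iff)

lemma card_first_occurrences:
  "card {t. t < length xs \<and> xs ! t \<notin> set (take t xs)} = card (set xs)"
proof (induction xs rule: rev_induct)
  case Nil
  then show ?case by simp
next
  case (snoc x xs)
  let ?A = "\<lambda>ys. {t. t < length ys \<and> ys ! t \<notin> set (take t ys)}"
  have A_snoc: "?A (xs @ [x]) = ?A xs \<union> (if x \<in> set xs then {} else {length xs})"
  proof (rule set_eqI)
    fix t
    show "t \<in> ?A (xs @ [x]) \<longleftrightarrow> t \<in> ?A xs \<union> (if x \<in> set xs then {} else {length xs})"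
    proof (cases "t < length xs")
      case True
      then have "(xs @ [x]) ! t = xs ! t" "take t (xs @ [x]) = take t xs"
        by (simp_all add: nth_append)
      then show ?thesis using True by auto
    next
      case False
      then show ?thesis by (cases "t = length xs") auto
    qed
  qed
  have "finite (?A xs)" by (rule finite_subset[of _ "{..<length xs}"]) auto
  moreover have "length xs \<notin> ?A xs" by simp
  ultimately show ?case
    using snoc.IH A_snoc by (cases "x \<in> set xs") (auto simp: insert_absorb)
qed

lemma beta_star_pos:
  assumes "xs \<noteq> []" "0 < b0"
  shows "0 < beta_star b0 xs t"
proof (cases "t = 0")
  case False
  have "1 \<le> m_t xs t" using m_t_pos[OF assms(1)] False by simp
  moreover have "real (m_t xs t) < real (t + 1)" using m_t_le[of xs t] by simp
  ultimately have "0 < ln (real (t + 1) / real (m_t xs t))" by simp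
  then show ?thesis using False \<open>1 \<le> m_t xs t\<close> by (simp add: beta_star_def)
qed (use assms in \<open>simp add: beta_star_def\<close>)

lemma S_cond_pos:
  assumes "\<And>i. 0 < u i" "\<And>k. 0 < v k" "0 < \<beta> t"
  shows "0 < S_cond \<beta> u v xs t i"
  using assms unfolding S_cond_def wt_def
  by (auto intro!: divide_pos_pos mult_pos_pos add_nonneg_pos)

lemma S_cond_0:
  "0 < \<beta> 0 \<Longrightarrow> S_cond \<beta> u v xs 0 i = wt u v xs 0 i"
  by (simp add: S_cond_def cnt_def)

lemma regret_eq_sum:
  assumes "\<And>i. 0 < u i" "\<And>k. 0 < v k" "\<And>t. 0 < \<beta> t"
  shows "regret \<beta> u v xs =
     ln ((\<Prod>j\<in>set xs. real (count_list xs j) ^ count_list xs j) / real (length xs) ^ length xs)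
     - (\<Sum>t<length xs. ln (S_cond \<beta> u v xs t (xs ! t)))"
proof -
  have "0 < S_cond \<beta> u v xs t i" for t i by (rule S_cond_pos) (use assms in auto)
  then have "ln (S_seq \<beta> u v xs) = (\<Sum>t<length xs. ln (S_cond \<beta> u v xs t (xs ! t)))"
    unfolding S_seq_def by (intro ln_prod) (auto simp: less_le)
  then show ?thesis by (simp add: regret_def)
qed

section \<open>Rescaling \<open>\<beta>\<close> by a factor at most 2\<close>

lemma S_cond_le_of_beta_within_factor_2:
  assumes "0 < \<beta>' t" "\<beta>' t \<le> \<beta> t" "\<beta> t \<le> 2 * \<beta>' t" "0 \<le> wt u v xs t i"
  shows "S_cond \<beta> u v xs t i \<le> (if cnt xs t i = 0 then 2 else 1) * S_cond \<beta>' u v xs t i"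
proof (cases "cnt xs t i = 0")
  case True
  have "real t * \<beta> t \<le> real t * (2 * \<beta>' t)" using assms(3) by (intro mult_left_mono) auto
  moreover have "\<beta> t * \<beta>' t \<le> 2 * (\<beta>' t * \<beta> t)" using assms(1,2) by simp
  ultimately have "\<beta> t * (real t + \<beta>' t) \<le> 2 * \<beta>' t * (real t + \<beta> t)"
    by (simp add: algebra_simps)
  then have "\<beta> t / (real t + \<beta> t) \<le> 2 * \<beta>' t / (real t + \<beta>' t)"
    using assms(1,2) by (simp add: divide_simps)
  then have "\<beta> t / (real t + \<beta> t) * wt u v xs t i \<le> 2 * \<beta>' t / (real t + \<beta>' t) * wt u v xs t i"
    using assms(4) by (rule mult_right_mono)
  then show ?thesis using True by (simp add: S_cond_def)
next
  case False
  then show ?thesis using assms(1,2) by (simp add: S_cond_def frac_le)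
qed

lemma regret_le_of_beta_within_factor_2:
  fixes u :: "'a \<Rightarrow> real"
  assumes u_pos: "\<And>i. 0 < u i" and v_pos: "\<And>k. 0 < v k"
    and pos: "\<And>t. 0 < \<beta> t" "\<And>t. 0 < \<beta>' t"
    and within: "\<And>t. 1 \<le> t \<Longrightarrow> \<beta>' t \<le> \<beta> t \<and> \<beta> t \<le> 2 * \<beta>' t"
    and ne: "xs \<noteq> []"
  shows "regret \<beta>' u v xs \<le> regret \<beta> u v xs + (real (card (set xs)) - 1) * ln 2"
proof -
  let ?new = "\<lambda>t. xs ! t \<notin> set (take t xs)"
  let ?S = "\<lambda>\<beta> t. S_cond \<beta> u v xs t (xs ! t)"
  have step: "ln (?S \<beta> t) \<le> ln (?S \<beta>' t) + (if 0 < t \<and> ?new t then ln 2 else 0)" for t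
  proof (cases "t = 0")
    case True
    then show ?thesis using pos by (simp add: S_cond_0)
  next
    case False
    have "0 \<le> wt u v xs t (xs ! t)" using u_pos v_pos by (simp add: wt_def less_imp_le)
    then have "?S \<beta> t \<le> (if ?new t then 2 else 1) * ?S \<beta>' t"
      using S_cond_le_of_beta_within_factor_2[of \<beta>' t \<beta> u v xs "xs ! t"] pos within False
      by (simp add: cnt_eq_0_iff)
    moreover have "0 < ?S \<beta> t" "0 < ?S \<beta>' t" by (rule S_cond_pos; use u_pos v_pos pos in auto)+
    ultimately have "ln (?S \<beta> t) \<le> ln ((if ?new t then 2 else 1) * ?S \<beta>' t)"
      by (simp del: mult_if_delta)
    then show ?thesis using False \<open>0 < ?S \<beta>' t\<close> by (cases "?new t") (simp_all add: ln_mult)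
  qed
  let ?A = "{t. t < length xs \<and> ?new t}"
  have "finite ?A" by (rule finite_subset[of _ "{..<length xs}"]) auto
  moreover have "0 \<in> ?A" using ne by simp
  moreover have "{..<length xs} \<inter> {t. 0 < t \<and> ?new t} = ?A - {0}" by auto
  moreover have "1 \<le> card (set xs)" using ne by (simp add: Suc_le_eq card_gt_0_iff)
  ultimately have "(\<Sum>t<length xs. if 0 < t \<and> ?new t then ln 2 else 0)
      = (real (card (set xs)) - 1) * ln 2"
    using card_first_occurrences[of xs] by (simp add: sum.If_cases of_nat_diff del: Int_iff)
  moreover have "(\<Sum>t<length xs. ln (?S \<beta> t))
      \<le> (\<Sum>t<length xs. ln (?S \<beta>' t)) + (\<Sum>t<length xs. if 0 < t \<and> ?new t then ln 2 else 0)"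
    unfolding sum.distrib[symmetric] by (intro sum_mono step)
  ultimately show ?thesis
    unfolding regret_eq_sum[OF u_pos v_pos pos(1)] regret_eq_sum[OF u_pos v_pos pos(2)] by linarith
qed

section \<open>Elementary logarithmic inequalities\<close>

lemma ln_diff_ge:
  fixes a b :: real assumes "0 < a" "0 < b"
  shows "(b - a) / b \<le> ln b - ln a"
proof -
  have "ln (a / b) \<le> a / b - 1" using assms by (intro ln_le_minus_one) simp
  then show ?thesis using assms by (simp add: ln_div diff_divide_distrib)
qed

lemma ln_diff_le:
  fixes a b :: real assumes "0 < a" "0 < b"
  shows "ln b - ln a \<le> (b - a) / a"
proof -
  have "ln (b / a) \<le> b / a - 1" using assms by (intro ln_le_minus_one) simp
  then show ?thesis using assms by (simp add: ln_div diff_divide_distrib)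
qed

lemma divide_le_divide_of_mult_le:
  fixes a b c d :: real
  assumes "0 < b" "0 < d" "a * d \<le> c * b"
  shows "a / b \<le> c / d"
  using assms by (simp add: divide_simps)

text \<open>The first terms of \<open>ln z = 2 artanh y\<close>, \<open>y = (z - 1)/(z + 1)\<close>, with the tail bounded geometrically.\<close>
lemma ln_artanh_bounds:
  fixes z :: real assumes "1 < z"
  defines "y \<equiv> (z - 1) / (z + 1)"
  shows "2*y \<le> ln z" and "ln z \<le> 2*y + 2*(y^3 / (1 - y^2) / 3)"
    and "2*y + 2*y^3/3 \<le> ln z" and "ln z \<le> 2*y + 2*y^3/3 + 2*(y^5 / (1 - y^2) / 5)"
proof -
  have "ln z \<in> {(\<Sum>k<1. 2*y^(2*k+1) / of_nat (2*k+1)) ..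
      (\<Sum>k<1. 2*y^(2*k+1) / of_nat (2*k+1)) + 2*(y^(2*1+1) / (1 - y^2) / of_nat (2*1+1))}"
    "ln z \<in> {(\<Sum>k<2. 2*y^(2*k+1) / of_nat (2*k+1)) ..
      (\<Sum>k<2. 2*y^(2*k+1) / of_nat (2*k+1)) + 2*(y^(2*2+1) / (1 - y^2) / of_nat (2*2+1))}"
    using ln_approx_bounds[OF assms(1), of 1] ln_approx_bounds[OF assms(1), of 2]
    unfolding y_def by simp_all
  then show "2*y \<le> ln z" "ln z \<le> 2*y + 2*(y^3 / (1 - y^2) / 3)"
    "2*y + 2*y^3/3 \<le> ln z" "ln z \<le> 2*y + 2*y^3/3 + 2*(y^5 / (1 - y^2) / 5)"
    by (simp_all add: eval_nat_numeral)
qed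

lemma ln_add_one_ge:
  fixes x :: real assumes "0 \<le> x"
  shows "2*x / (2 + x) \<le> ln (1 + x)"
proof (cases "x = 0")
  case False
  then have "1 < 1 + x" using assms by simp
  from ln_artanh_bounds(1)[OF this] show ?thesis by (simp add: add.commute)
qed simp

lemma ln_succ_diff_ge:
  fixes t :: real assumes "0 < t"
  shows "1 \<le> (t + 1/2) * (ln (t + 1) - ln t)"
proof -
  have "2*(1/t) / (2 + 1/t) \<le> ln (1 + 1/t)" using assms by (intro ln_add_one_ge) simp
  moreover have "ln (1 + 1/t) = ln (t + 1) - ln t" using assms by (simp add: ln_div field_simps)
  moreover have "2*(1/t) / (2 + 1/t) = 1 / (t + 1/2)" using assms by (simp add: field_simps)
  ultimately have "1 / (t + 1/2) \<le> ln (t + 1) - ln t" by simp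
  then show ?thesis using assms by (simp add: divide_le_eq mult.commute)
qed

text \<open>Robbins' bound, the step behind Stirling's formula with error \<open>1/(12c)\<close>.\<close>
lemma robbins_ineq:
  fixes c :: real assumes "0 < c"
  shows "(c + 1/2) * (ln (c + 1) - ln c) \<le> 1 + 1/12 * (1/c - 1/(c + 1))"
proof -
  define q where "q = 2*c + 1"
  have q: "1 < q" using assms by (simp add: q_def)
  have "(c + 1 - c) / (c + 1 + c) = 1/q" by (simp add: q_def)
  then have "ln ((c + 1)/c) \<le> 2*(1/q) + 2*((1/q)^3 / (1 - (1/q)^2) / 3)"
    using ln_artanh_bounds(2)[of "(c + 1)/c"] assms by (simp add: field_simps)
  also have "(1/q)^3 / (1 - (1/q)^2) = 1 / (q * (4 * (c * (c + 1))))"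
    using q by (simp add: field_simps power2_eq_square power3_eq_cube) (simp add: q_def algebra_simps)
  finally have "q/2 * ln ((c + 1)/c) \<le> q/2 * (2*(1/q) + 2*(1 / (q * (4 * (c * (c + 1))))) / 3)"
    using q by (intro mult_left_mono) auto
  also have "\<dots> = 1 + 1 / (12 * (c * (c + 1)))"
  proof -
    have "q/2 * (2*(1/q) + 2*(1 / (q * (4 * X))) / 3) = 1 + 1 / (12 * X)" if "0 < X" for X
      using that q by (simp add: field_simps)
    moreover have "0 < c * (c + 1)" using assms by simp
    ultimately show ?thesis by blast
  qed
  also have "1 / (12 * (c * (c + 1))) = 1/12 * (1/c - 1/(c + 1))"
    using assms by (simp add: field_simps)
  finally have "q/2 * ln ((c + 1)/c) \<le> 1 + 1/12 * (1/c - 1/(c + 1))" .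
  moreover have "q/2 = c + 1/2" by (simp add: q_def)
  ultimately show ?thesis using assms by (simp add: ln_div)
qed

lemma ln_1_plus_three_halves_le:
  fixes d :: real assumes "0 \<le> d"
  shows "ln (1 + 3/2 * d) \<le> 3/2 * ln (1 + d)"
proof -
  have "(1 + d)^3 - (1 + 3/2 * d)^2 = d^2 * (3/4 + d)"
    by (simp add: power2_eq_square power3_eq_cube algebra_simps)
  then have "(1 + 3/2 * d)^2 \<le> (1 + d)^3" using assms by (simp add: algebra_simps)
  then have "ln ((1 + 3/2 * d)^2) \<le> ln ((1 + d)^3)" using assms by (intro ln_mono) auto
  then show ?thesis using assms by (simp add: ln_realpow)
qed

lemma ln_fact_ge: "1 \<le> m \<Longrightarrow> real m * ln (real m) - real m + 1 \<le> ln (fact m :: real)"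
proof (induction m rule: nat_induct_at_least)
  case (Suc m)
  have "real m * (ln (real m + 1) - ln (real m)) \<le> 1"
    using ln_diff_le[of "real m" "real m + 1"] Suc.hyps by (simp add: field_simps)
  moreover have "ln (fact (Suc m) :: real) = ln (real m + 1) + ln (fact m)"
    by (simp add: ln_mult add.commute)
  ultimately show ?case using Suc.IH by (simp add: algebra_simps)
qed simp

lemma ln_fact_eq: "1 \<le> k \<Longrightarrow> ln (fact k :: real) = ln (real k) + ln (fact (k - 1))"
  by (simp add: fact_reduce ln_mult)

lemma ln_2_bounds: "6931/10000 \<le> ln (2::real)" "ln (2::real) \<le> 6932/10000"
  using ln_approx_bounds[of 2 4] by (simp_all add: eval_nat_numeral)

lemma ln_3_bounds: "10986/10000 \<le> ln (3::real)" "ln (3::real) \<le> 10987/10000"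
  using ln_approx_bounds[of 3 7] by (simp_all add: eval_nat_numeral)

lemma ln_3_2_bounds: "4054/10000 \<le> ln (3/2::real)" "ln (3/2::real) \<le> 4055/10000"
  using ln_approx_bounds[of "3/2" 3] by (simp_all add: eval_nat_numeral)

lemma ln_ln_2_ge: "- 3666/10000 \<le> ln (ln (2::real))"
proof -
  have "ln (10000/6931::real) \<le> 3666/10000"
    using ln_approx_bounds[of "10000/6931" 2] by (simp add: eval_nat_numeral)
  moreover have "ln (6931/10000) \<le> ln (ln (2::real))" using ln_2_bounds by simp
  ultimately show ?thesis by (simp add: ln_div)
qed

lemma ln_ln_3_ge: "939/10000 \<le> ln (ln (3::real))"
proof -
  have "939/10000 \<le> ln (10986/10000::real)"
    using ln_approx_bounds[of "10986/10000" 2] by (simp add: eval_nat_numeral)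
  moreover have "ln (10986/10000) \<le> ln (ln (3::real))" using ln_3_bounds by simp
  ultimately show ?thesis by linarith
qed

lemma ln_1_plus_ln_3_le: "ln (1 + ln (3::real)) \<le> 7415/10000"
proof -
  have "ln (20987/10000::real) \<le> 7415/10000"
    using ln_approx_bounds[of "20987/10000" 2] by (simp add: eval_nat_numeral)
  moreover have "ln (1 + ln (3::real)) \<le> ln (20987/10000)" using ln_3_bounds by simp
  ultimately show ?thesis by linarith
qed

lemma ln_1_plus_ln_3_2_le: "ln (1 + ln (3/2::real)) \<le> 3404/10000"
proof -
  have "ln (14055/10000::real) \<le> 3404/10000"
    using ln_approx_bounds[of "14055/10000" 2] by (simp add: eval_nat_numeral)
  moreover have "ln (1 + ln (3/2::real)) \<le> ln (14055/10000)" using ln_3_2_bounds by simp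
  ultimately show ?thesis by linarith
qed

lemma ln_1_plus_inv_ln_2_le: "ln (1 + 1 / ln (2::real)) \<le> 8932/10000"
proof -
  have "ln (16931/6931::real) \<le> 8932/10000"
    using ln_approx_bounds[of "16931/6931" 5] by (simp add: eval_nat_numeral)
  moreover have "1 + 1 / ln (2::real) \<le> 16931/6931" using ln_2_bounds by (simp add: divide_simps)
  then have "ln (1 + 1 / ln (2::real)) \<le> ln (16931/6931)"
    using ln_2_bounds by (intro ln_mono) (auto intro: add_pos_nonneg)
  ultimately show ?thesis by linarith
qed

lemma ln_1_plus_inv_2_ln_3_le: "ln (1 + 1 / (2 * ln (3::real))) \<le> 3751/10000"
proof -
  have "ln (31972/21972::real) \<le> 3751/10000"
    using ln_approx_bounds[of "31972/21972" 5] by (simp add: eval_nat_numeral)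
  moreover have "1 + 1 / (2 * ln (3::real)) \<le> 31972/21972" using ln_3_bounds by (simp add: divide_simps)
  then have "ln (1 + 1 / (2 * ln (3::real))) \<le> ln (31972/21972)"
    using ln_3_bounds by (intro ln_mono) (auto intro: add_pos_nonneg)
  ultimately show ?thesis by linarith
qed

section \<open>The potential argument for \<open>\<beta>\<^sup>*\<close>\<close>

definition nlnn :: "nat \<Rightarrow> real" where
  "nlnn c = real c * ln (real c)"

definition half_ln_robbins :: "nat \<Rightarrow> real" where
  "half_ln_robbins c = ln (real c) / 2 - 1 / (12 * real c)"

lemma nlnn_Suc_diff:
  "nlnn (Suc c) - nlnn c - ln (real c)
     = (real c + 1/2) * (ln (real c + 1) - ln (real c)) + (ln (real c + 1) - ln (real c)) / 2"
  by (simp add: nlnn_def field_simps)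

lemma nlnn_Suc_diff_le_half_ln_robbins_Suc_diff:
  assumes "1 \<le> c"
  shows "nlnn (Suc c) - nlnn c - ln (real c) \<le> 1 + (half_ln_robbins (Suc c) - half_ln_robbins c)"
proof -
  have "nlnn (Suc c) - nlnn c - ln (real c) - (half_ln_robbins (Suc c) - half_ln_robbins c)
      = (real c + 1/2) * (ln (real c + 1) - ln (real c)) - 1/12 * (1 / real c - 1 / (real c + 1))"
    by (simp add: nlnn_def half_ln_robbins_def algebra_simps)
  moreover have "(real c + 1/2) * (ln (real c + 1) - ln (real c))
      \<le> 1 + 1/12 * (1 / real c - 1 / (real c + 1))"
    using assms by (intro robbins_ineq) simp
  ultimately show ?thesis by simp
qed

lemma nlnn_Suc_diff_ge:
  assumes "1 \<le> t"
  shows "1 + (ln (real t + 1) - ln (real t)) / 2 \<le> nlnn (Suc t) - nlnn t - ln (real t)"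
  unfolding nlnn_Suc_diff using ln_succ_diff_ge[of "real t"] assms by simp

lemma ln_ml_eq:
  assumes "xs \<noteq> []"
  shows "ln ((\<Prod>j\<in>set xs. real (count_list xs j) ^ count_list xs j) / real (length xs) ^ length xs)
    = (\<Sum>j\<in>set xs. nlnn (count_list xs j)) - nlnn (length xs)"
proof -
  have pos: "0 < count_list xs j" if "j \<in> set xs" for j
    using that count_list_0_iff[of xs j] by (simp add: gr0I)
  then have "ln (\<Prod>j\<in>set xs. real (count_list xs j) ^ count_list xs j)
      = (\<Sum>j\<in>set xs. ln (real (count_list xs j) ^ count_list xs j))"
    by (intro ln_prod) auto
  moreover have "(\<Prod>j\<in>set xs. real (count_list xs j) ^ count_list xs j) \<noteq> 0"
    using pos by (simp add: prod_zero_iff)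
  ultimately show ?thesis using assms by (simp add: ln_div ln_realpow nlnn_def)
qed

lemma CL_eq_sum:
  "CL u v xs = (\<Sum>t<length xs. if xs ! t \<notin> set (take t xs) then ln (1 / wt u v xs t (xs ! t)) else 0)"
proof -
  have "{t. t < length xs \<and> xs ! t \<notin> set (take t xs)} = {t\<in>{..<length xs}. xs ! t \<notin> set (take t xs)}"
    by auto
  then show ?thesis unfolding CL_def by (simp only: sum.inter_filter finite_lessThan)
qed

lemma sum_diff_point_update:
  fixes f g :: "'a::finite \<Rightarrow> nat" and \<phi> :: "nat \<Rightarrow> real"
  assumes "\<And>j. j \<noteq> i \<Longrightarrow> g j = f j"
  shows "(\<Sum>j\<in>UNIV. \<phi> (g j)) - (\<Sum>j\<in>UNIV. \<phi> (f j)) = \<phi> (g i) - \<phi> (f i)"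
proof -
  have "(\<Sum>j\<in>UNIV. \<phi> (g j)) - (\<Sum>j\<in>UNIV. \<phi> (f j)) = (\<Sum>j\<in>UNIV. \<phi> (g j) - \<phi> (f j))"
    by (simp add: sum_subtractf)
  also have "\<dots> = (\<Sum>j\<in>UNIV. if j = i then \<phi> (g i) - \<phi> (f i) else 0)"
    using assms by (intro sum.cong) auto
  finally show ?thesis by simp
qed

lemma ln_S_cond_beta_star_seen:
  assumes "xs \<noteq> []" "1 \<le> t" "0 < cnt xs t i"
  shows "ln (S_cond (beta_star b0 xs) u v xs t i) = ln (real (cnt xs t i)) - ln (real t)
    - ln (1 + real (m_t xs t) / (real t * ln ((real t + 1) / real (m_t xs t))))"
proof -
  define k L where "k = real (m_t xs t)" and "L = ln ((real t + 1) / k)"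
  have k: "1 \<le> k" "k \<le> real t" using m_t_pos[OF assms(1,2)] m_t_le[of xs t] by (simp_all add: k_def)
  then have L: "0 < L" by (simp add: L_def)
  have "beta_star b0 xs t = k / L" using assms(2) by (simp add: beta_star_def k_def L_def add.commute)
  moreover have "real t + k / L = real t * (1 + k / (real t * L))" using assms(2) L
    by (simp add: field_simps)
  ultimately have "S_cond (beta_star b0 xs) u v xs t i = real (cnt xs t i) / (real t * (1 + k / (real t * L)))"
    using assms(3) by (simp add: S_cond_def)
  moreover have "0 < 1 + k / (real t * L)" using assms(2) L k by (simp add: add_pos_nonneg)
  ultimately have "ln (S_cond (beta_star b0 xs) u v xs t i)
      = ln (real (cnt xs t i)) - ln (real t) - ln (1 + k / (real t * L))"
    using assms(2,3) by (simp add: ln_div ln_mult)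
  then show ?thesis by (simp add: k_def L_def)
qed

lemma ln_S_cond_beta_star_unseen:
  assumes "xs \<noteq> []" "1 \<le> t" "cnt xs t i = 0" "0 < wt u v xs t i"
  shows "ln (S_cond (beta_star b0 xs) u v xs t i) = ln (wt u v xs t i) - ln (real t)
    - ln (1 / real t + ln ((real t + 1) / real (m_t xs t)) / real (m_t xs t))"
proof -
  define k L where "k = real (m_t xs t)" and "L = ln ((real t + 1) / k)"
  have k: "1 \<le> k" "k \<le> real t" using m_t_pos[OF assms(1,2)] m_t_le[of xs t] by (simp_all add: k_def)
  then have L: "0 < L" by (simp add: L_def)
  have tpos: "0 < real t" using assms(2) by simp
  then have "0 < k + L * real t" using L k by (simp add: add_pos_pos)
  have "beta_star b0 xs t = k / L" using assms(2) by (simp add: beta_star_def k_def L_def add.commute)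
  moreover have "k / L * w / (real t + k / L) = w / (real t * (1 / real t + L / k))" for w
  proof -
    have "real t + k / L = (k + L * real t) / L" using L by (simp add: field_simps)
    moreover have "real t * (1 / real t + L / k) = (k + L * real t) / k" using tpos k by (simp add: field_simps)
    ultimately show ?thesis using L k \<open>0 < k + L * real t\<close> by simp
  qed
  ultimately have "S_cond (beta_star b0 xs) u v xs t i
      = wt u v xs t i / (real t * (1 / real t + L / k))"
    using assms(3) by (simp add: S_cond_def)
  moreover have "0 < 1 / real t + L / k" using tpos L k by (simp add: add_pos_pos)
  ultimately have "ln (S_cond (beta_star b0 xs) u v xs t i)
      = ln (wt u v xs t i) - ln (real t) - ln (1 / real t + L / k)"
    using assms(4) tpos by (simp add: ln_div ln_mult)
  then show ?thesis by (simp add: k_def L_def)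
qed

text \<open>
  \<open>prefix_regret b0 u v xs t\<close> is the regret of \<open>\<beta>\<^sup>*\<close> on the prefix \<open>x\<^sub>1\<^sub>:\<^sub>t\<close> and
  \<open>prefix_bound \<Psi> u v xs t\<close> the bound maintained for it.
\<close>
definition prefix_regret :: "real \<Rightarrow> ('a::finite \<Rightarrow> real) \<Rightarrow> (nat \<Rightarrow> real) \<Rightarrow> 'a list \<Rightarrow> nat \<Rightarrow> real" where
  "prefix_regret b0 u v xs t = (\<Sum>j\<in>UNIV. nlnn (cnt xs t j)) - nlnn t
     - (\<Sum>s<t. ln (S_cond (beta_star b0 xs) u v xs s (xs ! s)))"

definition prefix_bound ::
    "(nat \<Rightarrow> nat \<Rightarrow> real) \<Rightarrow> ('a::finite \<Rightarrow> real) \<Rightarrow> (nat \<Rightarrow> real) \<Rightarrow> 'a list \<Rightarrow> nat \<Rightarrow> real" where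
  "prefix_bound \<Psi> u v xs t =
     (\<Sum>s<t. if xs ! s \<notin> set (take s xs) then ln (1 / wt u v xs s (xs ! s)) else 0)
     + (\<Sum>j\<in>UNIV. half_ln_robbins (cnt xs t j)) - ln (real t) / 2 + \<Psi> (m_t xs t) t"

lemma prefix_regret_1_le:
  fixes u :: "'a::finite \<Rightarrow> real"
  assumes u_pos: "\<And>i. 0 < u i" and v_pos: "\<And>k. 0 < v k" and "0 < b0" "xs \<noteq> []"
    and init: "1/12 \<le> \<Psi> 1 1"
  shows "prefix_regret b0 u v xs 1 \<le> prefix_bound \<Psi> u v xs 1"
proof -
  have cnt1: "cnt xs 1 j = (if j = xs ! 0 then 1 else 0)" for j
    using cnt_Suc[of 0 xs j] assms(4) by (simp add: cnt_def)
  have "nlnn (cnt xs 1 j) = 0" for j using cnt1[of j] by (cases "j = xs ! 0") (simp_all add: nlnn_def)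
  then have "(\<Sum>j\<in>UNIV. nlnn (cnt xs 1 j)) = 0" by simp
  moreover have "nlnn 1 = 0" by (simp add: nlnn_def)
  moreover have "half_ln_robbins (cnt xs 1 j) = (if j = xs ! 0 then - 1/12 else 0)" for j
    using cnt1[of j] by (cases "j = xs ! 0") (simp_all add: half_ln_robbins_def)
  then have "(\<Sum>j\<in>UNIV. half_ln_robbins (cnt xs 1 j)) = - 1/12" by simp
  moreover have "m_t xs 1 = 1" using assms(4) by (cases xs) (simp_all add: m_t_def)
  moreover have "S_cond (beta_star b0 xs) u v xs 0 (xs ! 0) = wt u v xs 0 (xs ! 0)"
    using assms(3) by (intro S_cond_0) (simp add: beta_star_def)
  moreover have "0 < wt u v xs 0 (xs ! 0)" using u_pos v_pos by (simp add: wt_def)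
  ultimately show ?thesis using init
    by (simp add: prefix_regret_def prefix_bound_def ln_div)
qed

lemma prefix_regret_Suc_le:
  fixes u :: "'a::finite \<Rightarrow> real" and \<Psi> :: "nat \<Rightarrow> nat \<Rightarrow> real"
  assumes u_pos: "\<And>i. 0 < u i" and v_pos: "\<And>k. 0 < v k" and ne: "xs \<noteq> []"
    and seen: "\<And>k t. 1 \<le> k \<Longrightarrow> k \<le> t \<Longrightarrow>
      ln (1 + real k / (real t * ln ((real t + 1) / real k))) \<le> \<Psi> k (t + 1) - \<Psi> k t"
    and unseen: "\<And>k t. 1 \<le> k \<Longrightarrow> k \<le> t \<Longrightarrow>
      ln (1 / real t + ln ((real t + 1) / real k) / real k) - 1 + 1/12 \<le> \<Psi> (k + 1) (t + 1) - \<Psi> k t"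
    and t: "1 \<le> t" "t < length xs"
  shows "prefix_regret b0 u v xs (Suc t) - prefix_regret b0 u v xs t
    \<le> prefix_bound \<Psi> u v xs (Suc t) - prefix_bound \<Psi> u v xs t"
proof -
  define i c k where "i = xs ! t" and "c = cnt xs t i" and "k = m_t xs t"
  let ?S = "S_cond (beta_star b0 xs) u v xs t i"
  have k: "1 \<le> k" "k \<le> t" using m_t_pos[OF ne t(1)] m_t_le[of xs t] by (simp_all add: k_def)
  have new_iff: "i \<notin> set (take t xs) \<longleftrightarrow> c = 0" by (simp add: c_def cnt_eq_0_iff)
  have upd: "j \<noteq> i \<Longrightarrow> cnt xs (Suc t) j = cnt xs t j" "cnt xs (Suc t) i = Suc c" for j
    using cnt_Suc[OF t(2)] by (simp_all add: i_def c_def)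
  have dL: "prefix_regret b0 u v xs (Suc t) - prefix_regret b0 u v xs t
      = nlnn (Suc c) - nlnn c - (nlnn (Suc t) - nlnn t) - ln ?S"
    using sum_diff_point_update[of i "cnt xs (Suc t)" "cnt xs t" nlnn] upd
    by (simp add: prefix_regret_def i_def c_def)
  have mS: "m_t xs (Suc t) = (if c = 0 then k + 1 else k)"
    using m_t_Suc[OF t(2)] new_iff by (auto simp: i_def k_def)
  have dR: "prefix_bound \<Psi> u v xs (Suc t) - prefix_bound \<Psi> u v xs t
      = (if c = 0 then ln (1 / wt u v xs t i) else 0)
        + (half_ln_robbins (Suc c) - half_ln_robbins c) - (ln (real t + 1) - ln (real t)) / 2
        + \<Psi> (if c = 0 then k + 1 else k) (t + 1) - \<Psi> k t"
    using sum_diff_point_update[of i "cnt xs (Suc t)" "cnt xs t" half_ln_robbins] upd new_iff mS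
    by (simp add: prefix_bound_def i_def c_def k_def add.commute diff_divide_distrib)
  have grow: "1 + (ln (real t + 1) - ln (real t)) / 2 \<le> nlnn (Suc t) - nlnn t - ln (real t)"
    using nlnn_Suc_diff_ge[OF t(1)] .
  show ?thesis
  proof (cases "c = 0")
    case False
    have "ln ?S = ln (real c) - ln (real t) - ln (1 + real k / (real t * ln ((real t + 1) / real k)))"
      using ln_S_cond_beta_star_seen[OF ne t(1)] False by (simp add: c_def k_def)
    then show ?thesis
      using dL dR grow seen[OF k] nlnn_Suc_diff_le_half_ln_robbins_Suc_diff[of c] False by simp
  next
    case True
    have "0 < wt u v xs t i" using u_pos v_pos by (simp add: wt_def)
    then have "ln ?S = ln (wt u v xs t i) - ln (real t) - ln (1 / real t + ln ((real t + 1) / real k) / real k)"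
      using ln_S_cond_beta_star_unseen[OF ne t(1)] True by (simp add: c_def k_def)
    moreover have "ln (1 / wt u v xs t i) = - ln (wt u v xs t i)" by (simp add: ln_div)
    ultimately show ?thesis
      using dL dR grow unseen[OF k] True by (simp add: nlnn_def half_ln_robbins_def)
  qed
qed

lemma regret_beta_star_le_potential:
  fixes u :: "'a::finite \<Rightarrow> real" and \<Psi> :: "nat \<Rightarrow> nat \<Rightarrow> real"
  assumes u_pos: "\<And>i. 0 < u i" and v_pos: "\<And>k. 0 < v k" and b0: "0 < b0" and ne: "xs \<noteq> []"
    and seen: "\<And>k t. 1 \<le> k \<Longrightarrow> k \<le> t \<Longrightarrow>
      ln (1 + real k / (real t * ln ((real t + 1) / real k))) \<le> \<Psi> k (t + 1) - \<Psi> k t"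
    and unseen: "\<And>k t. 1 \<le> k \<Longrightarrow> k \<le> t \<Longrightarrow>
      ln (1 / real t + ln ((real t + 1) / real k) / real k) - 1 + 1/12 \<le> \<Psi> (k + 1) (t + 1) - \<Psi> k t"
    and init: "1/12 \<le> \<Psi> 1 1"
  shows "regret (beta_star b0 xs) u v xs
    \<le> CL u v xs + (\<Sum>j\<in>set xs. ln (real (count_list xs j)) / 2) - ln (real (length xs)) / 2
      + \<Psi> (card (set xs)) (length xs)"
proof -
  let ?n = "length xs"
  have "prefix_regret b0 u v xs t \<le> prefix_bound \<Psi> u v xs t" if "1 \<le> t" "t \<le> ?n" for t
    using that
  proof (induction t rule: dec_induct)
    case base
    show ?case by (intro prefix_regret_1_le u_pos v_pos b0 ne init)
  next
    case (step t)
    have "prefix_regret b0 u v xs (Suc t) - prefix_regret b0 u v xs t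
        \<le> prefix_bound \<Psi> u v xs (Suc t) - prefix_bound \<Psi> u v xs t"
      using step.hyps step.prems by (intro prefix_regret_Suc_le u_pos v_pos ne seen unseen) auto
    then show ?case using step.IH step.prems by simp
  qed
  then have le: "prefix_regret b0 u v xs ?n \<le> prefix_bound \<Psi> u v xs ?n"
    using ne by (simp add: Suc_le_eq)
  have "(\<Sum>j\<in>UNIV. nlnn (count_list xs j)) = (\<Sum>j\<in>set xs. nlnn (count_list xs j))"
    by (rule sum.mono_neutral_right) (auto simp: nlnn_def count_list_0_iff)
  moreover have "regret (beta_star b0 xs) u v xs
      = ln ((\<Prod>j\<in>set xs. real (count_list xs j) ^ count_list xs j) / real ?n ^ ?n)
        - (\<Sum>t<?n. ln (S_cond (beta_star b0 xs) u v xs t (xs ! t)))"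
    by (intro regret_eq_sum u_pos v_pos beta_star_pos ne b0)
  ultimately have "prefix_regret b0 u v xs ?n = regret (beta_star b0 xs) u v xs"
    using ln_ml_eq[OF ne]
    by (simp add: prefix_regret_def cnt_def)
  moreover have "(\<Sum>j\<in>UNIV. half_ln_robbins (count_list xs j))
      \<le> (\<Sum>j\<in>set xs. ln (real (count_list xs j)) / 2)"
  proof -
    have "(\<Sum>j\<in>UNIV. half_ln_robbins (count_list xs j)) \<le> (\<Sum>j\<in>UNIV. ln (real (count_list xs j)) / 2)"
      by (intro sum_mono) (simp add: half_ln_robbins_def)
    also have "\<dots> = (\<Sum>j\<in>set xs. ln (real (count_list xs j)) / 2)"
      by (rule sum.mono_neutral_right) (auto simp: count_list_0_iff)
    finally show ?thesis .
  qed
  ultimately show ?thesis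
    using le by (simp add: prefix_bound_def cnt_def m_t_def CL_eq_sum)
qed

definition xln1p :: "real \<Rightarrow> real \<Rightarrow> real" where
  "xln1p b x = x * ln (1 + b / x)"

text \<open>\<open>dxln1p b\<close> is the derivative of the concave function \<open>xln1p b\<close> on \<open>(0, \<infinity>)\<close>.\<close>
definition dxln1p :: "real \<Rightarrow> real \<Rightarrow> real" where
  "dxln1p b x = ln (1 + b / x) - b / (x + b)"

lemma xln1p_0 [simp]: "xln1p b 0 = 0"
  by (simp add: xln1p_def)

lemma xln1p_nonneg: "0 < b \<Longrightarrow> 0 \<le> x \<Longrightarrow> 0 \<le> xln1p b x"
  unfolding xln1p_def by (intro mult_nonneg_nonneg) auto

lemma xln1p_le:
  assumes "0 < b" "0 \<le> x"
  shows "xln1p b x \<le> b"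
proof (cases "x = 0")
  case False
  then have "0 < x" using assms by simp
  then have "x * ln (1 + b / x) \<le> x * (b / x)"
    using assms by (intro mult_left_mono ln_add_one_self_le_self) auto
  then show ?thesis using \<open>0 < x\<close> by (simp add: xln1p_def)
qed (use assms in simp)

lemma dxln1p_nonneg:
  assumes "0 < b" "0 < x"
  shows "0 \<le> dxln1p b x"
proof -
  have "2 * (b / x) / (2 + b / x) \<le> ln (1 + b / x)" using assms by (intro ln_add_one_ge) simp
  moreover have "b / (x + b) \<le> 2 * (b / x) / (2 + b / x)"
  proof -
    have "2 * (b / x) / (2 + b / x) = 2 * b / (2 * x + b)" using assms by (simp add: field_simps)
    then show ?thesis using assms by (simp add: frac_le divide_simps)
  qed
  ultimately show ?thesis by (simp add: dxln1p_def)
qed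

lemma dxln1p_ge:
  assumes "0 < b" "0 < x" "0 < p"
  shows "ln (1 + 1 / p) - x / ((x + b) * p) \<le> dxln1p b x"
proof -
  have "(1 + b / x - (1 + 1 / p)) / (1 + b / x) \<le> ln (1 + b / x) - ln (1 + 1 / p)"
    using assms by (intro ln_diff_ge) (auto intro: add_pos_nonneg)
  moreover have "(1 + b / x - (1 + 1 / p)) / (1 + b / x) = b / (x + b) - x / ((x + b) * p)"
    using assms by (simp add: divide_simps) (simp add: algebra_simps)
  ultimately show ?thesis by (simp add: dxln1p_def)
qed

lemma xln1p_diff_ge:
  assumes b: "0 < b" and "0 \<le> x1" "x1 < x2"
  shows "(x2 - x1) * dxln1p b x2 \<le> xln1p b x2 - xln1p b x1"
proof (cases "x1 = 0")
  case True
  have "xln1p b x2 - x2 * dxln1p b x2 = x2 * (b / (x2 + b))"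
    by (simp add: xln1p_def dxln1p_def algebra_simps)
  moreover have "0 \<le> x2 * (b / (x2 + b))" using assms by simp
  ultimately show ?thesis using True by simp
next
  case False
  then have x1: "0 < x1" and x2: "0 < x2" using assms by auto
  define A B where "A = 1 + b / x2" and "B = 1 + b / x1"
  have "x1 * ((A - B) / A) \<le> x1 * (ln A - ln B)"
    using x1 x2 b by (intro mult_left_mono ln_diff_ge) (simp_all add: A_def B_def add_pos_pos)
  moreover have "(A - B) / A = b * (x1 - x2) / (x1 * (x2 + b))"
    using x1 x2 b unfolding A_def B_def by (simp add: divide_simps) (simp add: algebra_simps)
  ultimately have "b * (x1 - x2) / (x2 + b) \<le> x1 * (ln A - ln B)"
    using x1 by simp
  moreover have "xln1p b x2 - xln1p b x1 - (x2 - x1) * dxln1p b x2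
      = x1 * (ln A - ln B) + (x2 - x1) * (b / (x2 + b))"
    by (simp add: xln1p_def dxln1p_def A_def B_def algebra_simps)
  moreover have "(x2 - x1) * (b / (x2 + b)) + b * (x1 - x2) / (x2 + b) = 0"
    by (simp add: algebra_simps add_divide_distrib[symmetric])
  ultimately show ?thesis by linarith
qed

lemma xln1p_diff_le:
  assumes b: "0 < b" and x1: "0 < x1" and "x1 \<le> x2"
  shows "xln1p b x2 - xln1p b x1 \<le> (x2 - x1) * dxln1p b x1"
proof -
  have x2: "0 < x2" using assms by simp
  define A B where "A = 1 + b / x2" and "B = 1 + b / x1"
  have "x2 * (ln A - ln B) \<le> x2 * ((A - B) / B)"
    using x1 x2 b by (intro mult_left_mono ln_diff_le) (simp_all add: A_def B_def add_pos_pos)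
  moreover have "(A - B) / B = b * (x1 - x2) / (x2 * (x1 + b))"
    using x1 x2 b unfolding A_def B_def by (simp add: divide_simps) (simp add: algebra_simps)
  ultimately have "x2 * (ln A - ln B) \<le> b * (x1 - x2) / (x1 + b)"
    using x2 by simp
  moreover have "xln1p b x2 - xln1p b x1 - (x2 - x1) * dxln1p b x1
      = x2 * (ln A - ln B) + (x2 - x1) * (b / (x1 + b))"
    by (simp add: xln1p_def dxln1p_def A_def B_def algebra_simps)
  moreover have "(x2 - x1) * (b / (x1 + b)) + b * (x1 - x2) / (x1 + b) = 0"
    by (simp add: algebra_simps add_divide_distrib[symmetric])
  ultimately show ?thesis by linarith
qed

lemma ln_ln_diff_ge:
  fixes x1 x2 :: real assumes "1 \<le> x1" "x1 \<le> x2"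
  shows "(x2 - x1) / (x2 * ln (2*x2)) \<le> ln (ln (2*x2)) - ln (ln (2*x1))"
proof -
  have l: "0 < ln (2*x1)" "0 < ln (2*x2)" using assms by auto
  have "(x2 - x1) / (x2 * ln (2*x2)) = ((2*x2 - 2*x1) / (2*x2)) / ln (2*x2)"
    using assms by (simp add: field_simps)
  also have "\<dots> \<le> (ln (2*x2) - ln (2*x1)) / ln (2*x2)"
    using assms l by (intro divide_right_mono ln_diff_ge) auto
  also have "\<dots> \<le> ln (ln (2*x2)) - ln (ln (2*x1))"
    using l by (intro ln_diff_ge)
  finally show ?thesis .
qed

lemma ln_ln_diff_le:
  fixes x1 x2 :: real assumes "1 \<le> x1" "x1 \<le> x2"
  shows "ln (ln (2*x2)) - ln (ln (2*x1)) \<le> (x2 - x1) / (x1 * ln (2*x1))"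
proof -
  have l: "0 < ln (2*x1)" "0 < ln (2*x2)" using assms by auto
  have "ln (ln (2*x2)) - ln (ln (2*x1)) \<le> (ln (2*x2) - ln (2*x1)) / ln (2*x1)"
    using l by (intro ln_diff_le)
  also have "\<dots> \<le> ((2*x2 - 2*x1) / (2*x1)) / ln (2*x1)"
    using assms l by (intro divide_right_mono ln_diff_le) auto
  also have "\<dots> = (x2 - x1) / (x1 * ln (2*x1))"
    using assms by (simp add: field_simps)
  finally show ?thesis .
qed

definition H :: "real \<Rightarrow> real" where
  "H x = 3/2 * ln (ln (2*x)) + 1/10 + xln1p (6/5) (x - 1)"

definition dH :: "real \<Rightarrow> real" where
  "dH x = 3/2 / (x * ln (2*x)) + dxln1p (6/5) (x - 1)"

lemma H_diff_ge:
  assumes "1 \<le> x1" "x1 < x2"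
  shows "(x2 - x1) * dH x2 \<le> H x2 - H x1"
proof -
  define Q D E F where "Q = (x2 - x1) / (x2 * ln (2*x2))"
    and "D = ln (ln (2*x2)) - ln (ln (2*x1))"
    and "E = ((x2 - 1) - (x1 - 1)) * dxln1p (6/5) (x2 - 1)"
    and "F = xln1p (6/5) (x2 - 1) - xln1p (6/5) (x1 - 1)"
  have "Q \<le> D" unfolding Q_def D_def using assms by (intro ln_ln_diff_ge) auto
  moreover have "E \<le> F" unfolding E_def F_def using assms by (intro xln1p_diff_ge) auto
  moreover have "(x2 - x1) * dH x2 = 3/2 * Q + E" by (simp add: Q_def E_def dH_def distrib_left)
  moreover have "H x2 - H x1 = 3/2 * D + F" by (simp add: D_def F_def H_def algebra_simps)
  ultimately show ?thesis by linarith
qed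

lemma H_diff_le:
  assumes "1 < x1" "x1 \<le> x2"
  shows "H x2 - H x1 \<le> (x2 - x1) * dH x1"
proof -
  define Q D E F where "Q = (x2 - x1) / (x1 * ln (2*x1))"
    and "D = ln (ln (2*x2)) - ln (ln (2*x1))"
    and "E = ((x2 - 1) - (x1 - 1)) * dxln1p (6/5) (x1 - 1)"
    and "F = xln1p (6/5) (x2 - 1) - xln1p (6/5) (x1 - 1)"
  have "D \<le> Q" unfolding Q_def D_def using assms by (intro ln_ln_diff_le) auto
  moreover have "F \<le> E" unfolding E_def F_def using assms by (intro xln1p_diff_le) auto
  moreover have "(x2 - x1) * dH x1 = 3/2 * Q + E" by (simp add: Q_def E_def dH_def distrib_left)
  moreover have "H x2 - H x1 = 3/2 * D + F" by (simp add: D_def F_def H_def algebra_simps)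
  ultimately show ?thesis by linarith
qed

lemma ln_1_plus_inv_le_dH_large:
  fixes z :: real assumes z: "8 \<le> z"
  shows "ln (1 + 1 / (max 1 (z - 1/2) * ln z)) \<le> dH z"
proof -
  define s M where "s = ln z" and "M = z - 1/2"
  have s: "3 * ln 2 \<le> s"
  proof -
    have "ln (8::real) = 3 * ln 2" using ln_realpow[of 2 3] by simp
    moreover have "ln 8 \<le> ln z" using z by simp
    ultimately show ?thesis by (simp add: s_def)
  qed
  have l2: "0 < ln (2::real)" by simp
  have M: "max 1 (z - 1/2) = M" "1 \<le> M" using z by (simp_all add: M_def)
  have key: "z * (ln 2 + s) \<le> 3/2 * M * s"
  proof -
    have "(3 * ln 2) * (z/2 - 3/4) \<le> s * (z/2 - 3/4)" using s z by (intro mult_right_mono) auto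
    moreover have "0 \<le> ln 2 * (z/2 - 9/4)" using z l2 by (intro mult_nonneg_nonneg) auto
    moreover have "3/2 * M * s - z * (ln 2 + s) = s * (z/2 - 3/4) - z * ln 2"
      by (simp add: M_def field_simps)
    moreover have "(3 * ln 2) * (z/2 - 3/4) - z * ln 2 = ln 2 * (z/2 - 9/4)"
      by (simp add: algebra_simps)
    ultimately show ?thesis by linarith
  qed
  have pos: "0 < z * (ln 2 + s)" by (intro mult_pos_pos) (use z s l2 in linarith)+
  have "0 < s" using s l2 by linarith
  then have "ln (1 + 1 / (M * s)) \<le> 1 / (M * s)" using M by (intro ln_add_one_self_le_self) simp
  also have "\<dots> = (3/2) / (3/2 * M * s)" by simp
  also have "\<dots> \<le> (3/2) / (z * (ln 2 + s))" using key pos by (intro divide_left_mono) auto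
  also have "\<dots> = 3/2 / (z * ln (2*z))" using z by (simp add: s_def ln_mult)
  also have "\<dots> \<le> dH z" using z by (simp add: dH_def dxln1p_nonneg)
  finally show ?thesis by (simp add: M s_def)
qed

text \<open>
  With \<open>y = (z - 1)/(z + 1)\<close>, the inequality of \<open>ratio_le_dH_part\<close> becomes, after division by
  \<open>2y/(1 - y)\<^sup>2\<close>, \<open>lhs_poly c y \<le> rhs_poly_small y\<close> for \<open>z \<le> 3/2\<close> and
  \<open>lhs_poly c y \<le> rhs_poly_large y\<close> for \<open>z \<ge> 3/2\<close>.
\<close>
definition lhs_poly :: "real \<Rightarrow> real \<Rightarrow> real" where
  "lhs_poly c y = (1 + y) * (2*y + 2*y^3/3 + 2*(y^5/c/5) + 6932/10000)"

definition rhs_poly_small :: "real \<Rightarrow> real" where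
  "rhs_poly_small y = 3/2 * ((6/5 + 4*y/5) * (1 - y) * (1 + y^2/3))"

definition rhs_poly_large :: "real \<Rightarrow> real" where
  "rhs_poly_large y = 3/4 * ((6/5 + 4*y/5) * (1 + 3*y) * (1 + y^2/3))"

lemma lhs_poly_mono:
  assumes "0 < c" "0 \<le> y" "y \<le> y'"
  shows "lhs_poly c y \<le> lhs_poly c y'"
proof -
  have "y^3 \<le> y'^3" "y^5 / c / 5 \<le> y'^5 / c / 5"
    using assms by (auto intro: power_mono divide_right_mono)
  then have "2*y + 2*y^3/3 + 2*(y^5/c/5) + 6932/10000 \<le> 2*y' + 2*y'^3/3 + 2*(y'^5/c/5) + 6932/10000"
    using assms by linarith
  then show ?thesis unfolding lhs_poly_def using assms by (intro mult_mono) auto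
qed

lemma rhs_poly_large_mono:
  assumes "0 \<le> y" "y \<le> y'"
  shows "rhs_poly_large y \<le> rhs_poly_large y'"
proof -
  have "(6/5 + 4*y/5) * (1 + 3*y) \<le> (6/5 + 4*y'/5) * (1 + 3*y')"
    using assms by (intro mult_mono) auto
  moreover have "1 + y^2/3 \<le> 1 + y'^2/3" using assms by (auto intro: power_mono)
  ultimately show ?thesis
    unfolding rhs_poly_large_def using assms by (intro mult_left_mono mult_mono) auto
qed

lemma lhs_poly_le_rhs_poly_small:
  assumes "0 < y" "y \<le> 1/5"
  shows "lhs_poly (24/25) y \<le> rhs_poly_small y"
proof -
  have "lhs_poly (24/25) y \<le> lhs_poly (24/25) (1/5)" using assms by (intro lhs_poly_mono) auto
  also have "\<dots> \<le> 3/2 * ((6/5) * (4/5) * 1)" by (simp add: lhs_poly_def eval_nat_numeral)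
  also have "\<dots> \<le> rhs_poly_small y"
    unfolding rhs_poly_small_def using assms by (intro mult_left_mono mult_mono) auto
  finally show ?thesis .
qed

lemma lhs_poly_le_rhs_poly_large:
  assumes "1/5 \<le> y" "y \<le> 7/9"
  shows "lhs_poly (32/81) y \<le> rhs_poly_large y"
proof -
  have piece: "lhs_poly (32/81) y \<le> rhs_poly_large y"
    if "a \<le> y" "y \<le> b" "0 \<le> a" "lhs_poly (32/81) b \<le> rhs_poly_large a" for a b
    using lhs_poly_mono[of "32/81" y b] rhs_poly_large_mono[of a y] that by auto
  consider "y \<le> 7/25" | "7/25 \<le> y" "y \<le> 9/25" | "9/25 \<le> y" "y \<le> 11/25" | "11/25 \<le> y" "y \<le> 13/25"
    | "13/25 \<le> y" "y \<le> 59/100" | "59/100 \<le> y" "y \<le> 33/50" | "33/50 \<le> y" "y \<le> 71/100"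
    | "71/100 \<le> y" "y \<le> 3/4" | "3/4 \<le> y" by linarith
  then show ?thesis
  proof cases
    case 1 then show ?thesis using assms by (intro piece[of "1/5" "7/25"]) (auto simp: lhs_poly_def rhs_poly_large_def eval_nat_numeral)
  next
    case 2 then show ?thesis by (intro piece[of "7/25" "9/25"]) (auto simp: lhs_poly_def rhs_poly_large_def eval_nat_numeral)
  next
    case 3 then show ?thesis by (intro piece[of "9/25" "11/25"]) (auto simp: lhs_poly_def rhs_poly_large_def eval_nat_numeral)
  next
    case 4 then show ?thesis by (intro piece[of "11/25" "13/25"]) (auto simp: lhs_poly_def rhs_poly_large_def eval_nat_numeral)
  next
    case 5 then show ?thesis by (intro piece[of "13/25" "59/100"]) (auto simp: lhs_poly_def rhs_poly_large_def eval_nat_numeral)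
  next
    case 6 then show ?thesis by (intro piece[of "59/100" "33/50"]) (auto simp: lhs_poly_def rhs_poly_large_def eval_nat_numeral)
  next
    case 7 then show ?thesis by (intro piece[of "33/50" "71/100"]) (auto simp: lhs_poly_def rhs_poly_large_def eval_nat_numeral)
  next
    case 8 then show ?thesis by (intro piece[of "71/100" "3/4"]) (auto simp: lhs_poly_def rhs_poly_large_def eval_nat_numeral)
  next
    case 9 then show ?thesis using assms by (intro piece[of "3/4" "7/9"]) (auto simp: lhs_poly_def rhs_poly_large_def eval_nat_numeral)
  qed
qed

lemma ln_double_le_atanh_poly:
  fixes z :: real assumes z: "1 < z" "z < 8"
  defines "y \<equiv> (z - 1) / (z + 1)"
  defines "c \<equiv> if y \<le> 1/5 then 24/25 else 32/81 :: real"
  shows "ln (2*z) \<le> 2*y + 2*y^3/3 + 2*(y^5/c/5) + 6932/10000"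
proof -
  have y: "0 < y" "y < 7/9" using z by (simp_all add: y_def divide_less_eq)
  have c: "0 < c" "c \<le> 1 - y^2"
  proof -
    have "y^2 \<le> (if y \<le> 1/5 then 1/5 else 7/9)^2" using y by (intro power_mono) auto
    then show "0 < c" "c \<le> 1 - y^2" by (auto simp: c_def power2_eq_square split: if_splits)
  qed
  have "y^5 / (1 - y^2) / 5 \<le> y^5 / c / 5" using c y by (intro divide_right_mono divide_left_mono) auto
  moreover have "ln z \<le> 2*y + 2*y^3/3 + 2*(y^5 / (1 - y^2) / 5)"
    using ln_artanh_bounds(4)[OF z(1)] unfolding y_def .
  ultimately have "ln z \<le> 2*y + 2*y^3/3 + 2*(y^5/c/5)" by linarith
  then show ?thesis using z ln_2_bounds by (simp add: ln_mult)
qed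

lemma ratio_le_dH_part:
  fixes z :: real assumes z: "1 < z" "z < 8"
  defines "y \<equiv> (z - 1) / (z + 1)"
  shows "(z - 1) / ((z - 1 + 6/5) * (max 1 (z - 1/2) * (2*y + 2*y^3/3))) \<le> 3/2 / (z * ln (2*z))"
proof -
  define w c hi where "w = 1 - y" and "c = (if y \<le> 1/5 then 24/25 else 32/81 :: real)"
    and "hi = 2*y + 2*y^3/3 + 2*(y^5/c/5) + 6932/10000"
  have y: "0 < y" "y < 7/9" using z by (simp_all add: y_def divide_less_eq)
  have w: "0 < w" using y by (simp add: w_def)
  have zw: "z = (1 + y) / w" using z by (simp add: w_def y_def field_simps)
  have hi: "ln (2*z) \<le> hi" using ln_double_le_atanh_poly[OF z] by (simp add: hi_def c_def y_def)
  have "0 < y^3" "0 \<le> y^5/c/5" using y by (simp_all add: c_def)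
  then have hi_pos: "0 < hi" using y unfolding hi_def by linarith
  have lhs: "(z - 1) * z * hi = (2*y / w^2) * lhs_poly c y"
    unfolding zw using w by (simp add: lhs_poly_def hi_def w_def field_simps power2_eq_square)
  have rhs: "3/2 * ((z - 1 + 6/5) * (max 1 (z - 1/2) * (2*y + 2*y^3/3)))
      = (2*y / w^2) * (if y \<le> 1/5 then rhs_poly_small y else rhs_poly_large y)"
  proof -
    define A B where "A = 6/5 + 4*y/5" and "B = 1 + y^2/3"
    have ub: "z - 1 + 6/5 = A / w" using zw w by (simp add: A_def w_def field_simps)
    have lob: "2*y + 2*y^3/3 = 2*y*B" by (simp add: B_def algebra_simps power3_eq_cube power2_eq_square)
    show ?thesis
    proof (cases "y \<le> 1/5")
      case True
      then have "z \<le> 3/2" using z by (simp add: y_def divide_le_eq)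
      then have M: "max 1 (z - 1/2) = 1" by simp
      have g: "rhs_poly_small y = 3/2 * A * w * B" by (simp add: rhs_poly_small_def A_def B_def w_def)
      show ?thesis using True w unfolding ub lob M g by (simp add: power2_eq_square field_simps)
    next
      case False
      then have "3/2 \<le> z" using z by (simp add: y_def le_divide_eq)
      then have "max 1 (z - 1/2) = z - 1/2" by simp
      also have "z - 1/2 = (1 + 3*y) / (2*w)" using zw w by (simp add: field_simps w_def)
      finally have M: "max 1 (z - 1/2) = (1 + 3*y) / (2*w)" .
      have g: "rhs_poly_large y = 3/4 * A * (1 + 3*y) * B" by (simp add: rhs_poly_large_def A_def B_def)
      show ?thesis using False w unfolding ub lob M g by (simp add: power2_eq_square field_simps)
    qed
  qed
  have "lhs_poly c y \<le> (if y \<le> 1/5 then rhs_poly_small y else rhs_poly_large y)"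
    using lhs_poly_le_rhs_poly_small[of y] lhs_poly_le_rhs_poly_large[of y] y by (simp add: c_def)
  then have "(z - 1) * z * hi \<le> 3/2 * ((z - 1 + 6/5) * (max 1 (z - 1/2) * (2*y + 2*y^3/3)))"
    unfolding lhs rhs using y w by (intro mult_left_mono) auto
  moreover have "0 < (z - 1 + 6/5) * (max 1 (z - 1/2) * (2*y + 2*y^3/3))"
    using z y by (intro mult_pos_pos add_pos_pos) auto
  ultimately have "(z - 1) / ((z - 1 + 6/5) * (max 1 (z - 1/2) * (2*y + 2*y^3/3))) \<le> 3/2 / (z * hi)"
    using z hi_pos by (intro divide_le_divide_of_mult_le) (simp_all add: mult.assoc)
  also have "\<dots> \<le> 3/2 / (z * ln (2*z))"
    using z hi hi_pos by (intro divide_left_mono mult_left_mono mult_pos_pos) auto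
  finally show ?thesis .
qed

lemma ln_1_plus_inv_le_dH_small:
  fixes z :: real assumes z: "1 < z" "z < 8"
  shows "ln (1 + 1 / (max 1 (z - 1/2) * ln z)) \<le> dH z"
proof -
  define y M lo where "y = (z - 1) / (z + 1)" and "M = max 1 (z - 1/2)" and "lo = 2*y + 2*y^3/3"
  have M: "1 \<le> M" by (simp add: M_def)
  have "0 < y" using z by (simp add: y_def)
  then have lo: "0 < lo" by (simp add: lo_def add_pos_pos)
  have "lo \<le> ln z" using ln_artanh_bounds(3)[OF z(1)] by (simp add: lo_def y_def)
  then have "ln (1 + 1 / (M * ln z)) \<le> ln (1 + 1 / (M * lo))"
    using M lo by (simp add: frac_le add_pos_nonneg)
  also have "\<dots> \<le> dxln1p (6/5) (z - 1) + (z - 1) / ((z - 1 + 6/5) * (M * lo))"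
    using dxln1p_ge[of "6/5" "z - 1" "M * lo"] z M lo by simp
  also have "\<dots> \<le> dxln1p (6/5) (z - 1) + 3/2 / (z * ln (2*z))"
    using ratio_le_dH_part[OF z] by (simp add: M_def lo_def y_def)
  finally show ?thesis by (simp add: dH_def M_def)
qed

lemma ln_1_plus_inv_le_dH:
  fixes z :: real assumes "1 < z"
  shows "ln (1 + 1 / (max 1 (z - 1/2) * ln z)) \<le> dH z"
  using ln_1_plus_inv_le_dH_small[OF assms] ln_1_plus_inv_le_dH_large by (cases "z < 8") auto

lemma H_tangent_eq:
  assumes "1 \<le> a"
  shows "H a - (a - 1) * dH a = 3/2 * ln (ln (2*a)) + 1/10 - 3/2 * (a - 1) / (a * ln (2*a))
    + 6/5 * (a - 1) / (a - 1 + 6/5)"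
proof -
  have "xln1p (6/5) (a - 1) - (a - 1) * dxln1p (6/5) (a - 1) = (a - 1) * (6/5 / (a - 1 + 6/5))"
    by (simp add: xln1p_def dxln1p_def algebra_simps)
  then show ?thesis by (simp add: H_def dH_def algebra_simps)
qed

lemma H_tangent_ge_small:
  fixes a :: real assumes a: "1 \<le> a" "a \<le> 3/2"
  shows "ln (1 + ln (3/2 * a)) - 1 + 1/12 \<le> H a - (a - 1) * dH a"
proof -
  define M where "M = ln (2*a)"
  have M: "0 < M" "M - ln 2 = ln a" using a by (simp add: M_def, simp add: M_def ln_mult)
  have "(a - 1) / a / M \<le> ln a / M"
    using ln_diff_ge[of 1 a] a M by (intro divide_right_mono) auto
  moreover have "(M - ln 2) / M \<le> ln M - ln (ln 2)" using M by (intro ln_diff_ge) auto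
  ultimately have "(a - 1) / (a * M) \<le> ln M - ln (ln 2)" using M by simp
  moreover have "3/2 * (a - 1) / (a * M) = 3/2 * ((a - 1) / (a * M))" by simp
  ultimately have lnM: "3/2 * (a - 1) / (a * M) \<le> 3/2 * ln M - 3/2 * ln (ln 2)" by linarith
  have "ln (3/2 * a) = ln (3/2) + ln a" using a by (subst ln_mult_pos) auto
  moreover have "0 \<le> ln a" using a by simp
  ultimately have "ln (1 + ln (3/2 * a)) - ln (1 + ln (3/2)) \<le> ln a / (1 + ln (3/2))"
    using ln_diff_le[of "1 + ln (3/2)" "1 + ln (3/2 * a)"] ln_3_2_bounds by simp
  also have "\<dots> \<le> (a - 1) / (1 + ln (3/2))"
    using a ln_le_minus_one[of a] ln_3_2_bounds by (intro divide_right_mono) auto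
  also have "\<dots> \<le> (a - 1) / (14054/10000)"
    using a ln_3_2_bounds by (intro divide_left_mono) auto
  also have "\<dots> = (a - 1) * (10000/14054)" by simp
  finally have ln1: "ln (1 + ln (3/2 * a)) - ln (1 + ln (3/2)) \<le> (a - 1) * (10000/14054)" .
  have "(a - 1) * (12/17) = 6/5 * (a - 1) / (17/10)" by simp
  also have "\<dots> \<le> 6/5 * (a - 1) / (a - 1 + 6/5)" using a by (intro divide_left_mono) auto
  finally have rat: "(a - 1) * (12/17) \<le> 6/5 * (a - 1) / (a - 1 + 6/5)" .
  have "(a - 1) * (10000/14054) \<le> (a - 1) * (12/17) + 1/100" using a by (simp add: field_simps)
  then have "ln (1 + ln (3/2 * a)) - 1 + 1/12 \<le> 3/2 * ln (ln 2) + 1/10 + (a - 1) * (12/17)"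
    using ln1 ln_ln_2_ge ln_1_plus_ln_3_2_le by linarith
  then show ?thesis using H_tangent_eq[OF a(1), folded M_def] lnM rat by linarith
qed

lemma H_tangent_ge_large:
  fixes a :: real assumes a: "3/2 \<le> a"
  shows "ln (1 + ln (3/2 * a)) - 1 + 1/12 \<le> H a - (a - 1) * dH a"
proof -
  define M where "M = ln (2*a)"
  have M: "ln 3 \<le> M" "0 < M" using a by (simp_all add: M_def)
  have ln3: "0 < ln (3::real)" "0 < 1 + ln (3::real)" by (simp, simp add: add_pos_pos)
  have "ln (3/2 * a) \<le> ln (2 * a)" "0 \<le> ln (3/2 * a)" using a by simp_all
  then have "ln (1 + ln (3/2 * a)) \<le> ln (1 + M)" unfolding M_def by (intro ln_mono) auto
  moreover have "ln (1 + M) - ln (1 + ln 3) \<le> ln M - ln (ln 3)"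
  proof -
    have "(1 + M) / (1 + ln 3) \<le> M / ln 3"
      using M ln3 by (intro divide_le_divide_of_mult_le) (simp_all add: algebra_simps)
    then have "ln ((1 + M) / (1 + ln 3)) \<le> ln (M / ln 3)" by (rule ln_mono) (use M ln3 in auto)
    then show ?thesis using M ln3 by (simp add: ln_div)
  qed
  moreover have "ln (ln 3) \<le> ln M" by (rule ln_mono[OF M(1) ln3(1)])
  moreover have "18/17 - 15000/10986 \<le> 6/5 * (a - 1) / (a - 1 + 6/5) - 3/2 * (a - 1) / (a * M)"
  proof -
    define d r where "d = a - 1 + 6/5" and "r = 6/5 * a / (a - 1 + 6/5) - 3/2 / M"
    have "0 < d" using a by (simp add: d_def)
    then have "6/5 * (a - 1) / d - 3/2 * (a - 1) / (a * M) = (a - 1) / a * (6/5 * a / d - 3/2 / M)"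
      using a M by (simp add: field_simps)
    then have "6/5 * (a - 1) / (a - 1 + 6/5) - 3/2 * (a - 1) / (a * M) = (a - 1) / a * r"
      by (simp add: d_def r_def)
    moreover have "18/17 - 15000/10986 \<le> (a - 1) / a * r"
    proof (cases "0 \<le> r")
      case True
      have "0 \<le> (a - 1) / a * r" using a True by (intro mult_nonneg_nonneg) auto
      then show ?thesis by simp
    next
      case False
      have "18/17 \<le> 6/5 * a / (a - 1 + 6/5)" using a by (simp add: le_divide_eq)
      moreover have "3/2 / M \<le> 15000/10986"
      proof -
        have "3/2 / M \<le> 3/2 / (10986/10000)" using M ln_3_bounds by (intro divide_left_mono) auto
        then show ?thesis by simp
      qed
      moreover have "1 * r \<le> (a - 1) / a * r" using False a by (intro mult_right_mono_neg) auto
      ultimately show ?thesis by (simp add: r_def)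
    qed
    ultimately show ?thesis by simp
  qed
  ultimately show ?thesis
    using H_tangent_eq[of a, folded M_def] a ln_ln_3_ge ln_1_plus_ln_3_le by simp
qed

lemma H_tangent_ge:
  "1 \<le> a \<Longrightarrow> ln (1 + ln (3/2 * a)) - 1 + 1/12 \<le> H a - (a - 1) * dH a"
  using H_tangent_ge_small[of a] H_tangent_ge_large[of a] by (cases "a \<le> 3/2") auto

section \<open>The potential \<open>\<Psi>\<close>\<close>

definition Psi1 :: "nat \<Rightarrow> real" where
  "Psi1 t = (\<Sum>s\<in>{1..<t}. ln (1 + 1 / (real s * ln (real s + 1))))"

lemma Psi1_Suc: "t \<ge> 1 \<Longrightarrow> Psi1 (Suc t) = Psi1 t + ln (1 + 1 / (real t * ln (real t + 1)))"
  unfolding Psi1_def by (simp add: sum.atLeastLessThan_Suc)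

lemma Psi1_1: "Psi1 1 = 0" by (simp add: Psi1_def)

lemma ln_1_plus_inv_le_ln_ln_diff:
  fixes t :: real assumes t3: "t \<ge> 3"
  shows "ln (1 + 1 / (t * ln (t + 1))) \<le> 3/2 * (ln (ln (t + 2)) - ln (ln (t + 1)))"
proof -
  define L where "L = ln (t + 1)"
  have Lp: "L > 0" using t3 by (simp add: L_def)
  define \<delta> where "\<delta> = (ln (t + 2) - ln (t + 1)) / L"
  have d1: "ln (t + 2) - ln (t + 1) = ln (1 + 1 / (t + 1))"
  proof -
    have e: "1 + 1 / (t + 1) = (t + 2) / (t + 1)" using t3 by (simp add: field_simps)
    have "t + 2 > 0" "t + 1 > 0" using t3 by auto
    then show ?thesis unfolding e by (simp add: ln_div)
  qed
  have d2: "ln (1 + 1 / (t + 1)) \<ge> 2 * (1 / (t + 1)) / (2 + 1 / (t + 1))" using t3 by (intro ln_add_one_ge) simp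
  have d3: "2 * (1 / (t + 1)) / (2 + 1 / (t + 1)) = 2 / (2*t + 3)"
  proof -
    define q where "q = t + 1"
    have qp: "q > 0" using t3 by (simp add: q_def)
    have "2 * (1 / q) / (2 + 1 / q) = 2 / (2*q + 1)" using qp by (simp add: field_simps)
    moreover have "2*q + 1 = 2*t + 3" by (simp add: q_def)
    ultimately show ?thesis by (simp add: q_def)
  qed
  have dlow: "\<delta> \<ge> 2 / (2*t + 3) / L" unfolding \<delta>_def using d1 d2 d3 Lp by (intro divide_right_mono) auto
  have "0 \<le> 2 / (2*t + 3) / L" using t3 Lp by simp
  then have dp: "\<delta> \<ge> 0" using dlow by linarith
  have lnlnd: "ln (ln (t + 2)) - ln (ln (t + 1)) = ln (1 + \<delta>)"
  proof -
    have "ln (t + 2) = L * (1 + \<delta>)" unfolding \<delta>_def using Lp by (simp add: field_simps L_def)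
    moreover have "1 + \<delta> > 0" using dp by simp
    ultimately show ?thesis using Lp by (simp add: ln_mult L_def)
  qed
  have lncube: "2 * ln (1 + 3/2 * \<delta>) \<le> 3 * ln (1 + \<delta>)" using ln_1_plus_three_halves_le[OF dp] by simp
  have c1: "1 / (t * L) \<le> 3/2 * \<delta>"
  proof -
    have "1 / (t * L) \<le> 3 / (2*t + 3) / L"
    proof -
      have "1 / t \<le> 3 / (2*t + 3)" using t3 by (simp add: field_simps)
      then have "1 / t / L \<le> 3 / (2*t + 3) / L" using Lp by (intro divide_right_mono) auto
      then show ?thesis by simp
    qed
    also have "\<dots> = 3/2 * (2 / (2*t + 3) / L)" by simp
    also have "\<dots> \<le> 3/2 * \<delta>" using dlow by simp
    finally show ?thesis .
  qed
  have "ln (1 + 1 / (t * L)) \<le> ln (1 + 3/2 * \<delta>)" using c1 t3 Lp by (intro ln_mono) (auto intro: add_pos_nonneg)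
  then show ?thesis using lncube lnlnd by (simp add: L_def)
qed

lemma Psi1_le: "t \<ge> 1 \<Longrightarrow> Psi1 t \<le> 3/2 * ln (ln (real t + 1)) + 1"
proof (induction t rule: nat_induct_at_least)
  case base
  then show ?case using Psi1_1 ln_ln_2_ge by simp
next
  case (Suc t)
  show ?case
  proof (cases "t \<le> 2")
    case True
    then have "t = 1 \<or> t = 2" using Suc.hyps by auto
    then show ?thesis
    proof
      assume t1: "t = 1"
      have "Psi1 (Suc t) = ln (1 + 1 / ln 2)" using Psi1_Suc[of 1] Psi1_1 t1 by simp
      moreover have "ln (ln (real (Suc t) + 1)) = ln (ln 3)" using t1 by simp
      ultimately show ?thesis using ln_1_plus_inv_ln_2_le ln_ln_3_ge by linarith
    next
      assume t2: "t = 2"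
      have "Psi1 (Suc t) = ln (1 + 1 / ln 2) + ln (1 + 1 / (2 * ln 3))"
        using Psi1_Suc[of 1] Psi1_Suc[of 2] Psi1_1 t2 by (simp add: numeral_eq_Suc)
      moreover have "ln (ln (real (Suc t) + 1)) = ln (ln 4)" using t2 by simp
      moreover have "ln (ln (4::real)) = ln 2 + ln (ln 2)"
      proof -
        have "ln (4::real) = 2 * ln 2" using ln_realpow[of 2 2] by simp
        then show ?thesis by (simp add: ln_mult)
      qed
      ultimately show ?thesis using ln_1_plus_inv_ln_2_le ln_1_plus_inv_2_ln_3_le ln_ln_2_ge ln_2_bounds by linarith
    qed
  next
    case False
    then have t3: "real t \<ge> 3" by simp
    have "Psi1 (Suc t) = Psi1 t + ln (1 + 1 / (real t * ln (real t + 1)))" using Suc.hyps by (simp add: Psi1_Suc)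
    also have "\<dots> \<le> 3/2 * ln (ln (real t + 1)) + 1 + 3/2 * (ln (ln (real t + 2)) - ln (ln (real t + 1)))"
      using Suc.IH ln_1_plus_inv_le_ln_ln_diff[OF t3] by linarith
    also have "\<dots> = 3/2 * ln (ln (real (Suc t) + 1)) + 1" by (simp add: algebra_simps)
    finally show ?thesis .
  qed
qed

text \<open>For \<open>k = 1\<close> the potential is the exact sum of the losses at repeated symbols.\<close>
definition Psi :: "nat \<Rightarrow> nat \<Rightarrow> real" where
  "Psi k t = (if k = 1 then 1/12 + Psi1 t
              else - ln (fact (k - 1) :: real) + real k * H (real t / real k) + 3/2)"

lemma Psi_seen_step_ge_2:
  fixes k t :: nat assumes k: "2 \<le> k" "k \<le> t"
  shows "ln (1 + real k / (real t * ln ((real t + 1) / real k)))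
    \<le> real k * (H ((real t + 1) / real k) - H (real t / real k))"
proof -
  define z x M where "z = (real t + 1) / real k" and "x = real t / real k" and "M = max 1 (z - 1/2)"
  have kt: "0 < real k" "0 < real t" using k by auto
  have x: "1 \<le> x" using k kt by (simp add: x_def)
  have zx: "z - x = 1 / real k" unfolding z_def x_def diff_divide_distrib[symmetric] by simp
  moreover have "0 < 1 / real k" using kt by simp
  ultimately have "x < z" by linarith
  then have "real k * ((z - x) * dH z) \<le> real k * (H z - H x)"
    using x kt by (intro mult_left_mono H_diff_ge) auto
  then have gain: "dH z \<le> real k * (H z - H x)" using zx kt by simp
  have "1 < z" using x \<open>x < z\<close> by simp
  then have lnz: "0 < ln z" and dH: "ln (1 + 1 / (M * ln z)) \<le> dH z"
    using ln_1_plus_inv_le_dH by (simp_all add: M_def)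
  have "real k * M \<le> real t"
    using k kt by (simp add: M_def z_def field_simps max_def)
  then have "real k / (real t * ln z) \<le> 1 / (M * ln z)"
    using kt lnz by (intro divide_le_divide_of_mult_le) (auto simp: M_def mult.assoc[symmetric])
  moreover have "0 < 1 + real k / (real t * ln z)" using kt lnz by (simp add: add_pos_nonneg)
  ultimately have "ln (1 + real k / (real t * ln z)) \<le> ln (1 + 1 / (M * ln z))"
    by (intro ln_mono) auto
  then show ?thesis using gain dH by (simp add: z_def x_def)
qed

lemma H_tangent_le_combination:
  fixes k a x :: real
  assumes "1 \<le> a" "a \<le> x" "0 \<le> k" "k * (x - a) = a - 1"
  shows "H a - (a - 1) * dH a \<le> (k + 1) * H a - k * H x"
proof (cases "a = 1")
  case True
  then have "k * (x - a) = 0" using assms(4) by simp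
  then show ?thesis using True by (cases "k = 0") (auto simp: algebra_simps)
next
  case False
  then have "H x - H a \<le> (x - a) * dH a" using assms(1,2) by (intro H_diff_le) auto
  then have "k * (H x - H a) \<le> k * ((x - a) * dH a)" using assms(3) by (rule mult_left_mono)
  also have "\<dots> = (a - 1) * dH a" using assms(4) by (simp add: mult.assoc[symmetric])
  finally show ?thesis by (simp add: algebra_simps)
qed

lemma Psi_unseen_step_ge_2:
  fixes k t :: nat assumes k: "2 \<le> k" "k \<le> t"
  shows "ln (1 / real t + ln ((real t + 1) / real k) / real k) - 1 + 1/12 \<le> Psi (k + 1) (t + 1) - Psi k t"
proof -
  define a x L where "a = (real t + 1) / (real k + 1)" and "x = real t / real k"
    and "L = ln ((real t + 1) / real k)"
  have kt: "0 < real k" "0 < real t" using k by auto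
  have a: "1 \<le> a" using k by (simp add: a_def)
  have "a \<le> x"
    unfolding a_def x_def using k kt by (intro divide_le_divide_of_mult_le) (auto simp: algebra_simps)
  moreover have "real k * (x - a) = a - 1"
    using kt unfolding a_def x_def by (simp add: divide_simps) (simp add: algebra_simps)
  ultimately have comb: "H a - (a - 1) * dH a \<le> (real k + 1) * H a - real k * H x"
    using a by (intro H_tangent_le_combination) auto
  have dPsi: "Psi (k + 1) (t + 1) - Psi k t = - ln (real k) + ((real k + 1) * H a - real k * H x)"
    using k ln_fact_eq[of k] by (simp add: Psi_def a_def x_def add.commute)
  have L: "0 \<le> L" using k by (simp add: L_def)
  have "L \<le> ln (3/2 * a)"
  proof -
    have "(real t + 1) * 2 \<le> (real t + 1) * real k" using k by (intro mult_left_mono) auto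
    then have "(real t + 1) / real k \<le> 3/2 * a"
      unfolding a_def using kt by (simp add: divide_simps) (simp add: algebra_simps)
    then show ?thesis using kt unfolding L_def by (intro ln_mono) auto
  qed
  moreover have "real k / real t \<le> 1" using k by simp
  moreover have pos: "0 < real k / real t + L" using kt L by (simp add: add_pos_nonneg)
  ultimately have "ln (real k / real t + L) \<le> ln (1 + ln (3/2 * a))" by (intro ln_mono) auto
  moreover have "ln (1 / real t + L / real k) = ln (real k / real t + L) - ln (real k)"
  proof -
    have "1 / real t + L / real k = (real k / real t + L) / real k" using kt by (simp add: field_simps)
    then show ?thesis using kt pos by (simp add: ln_div)
  qed
  ultimately show ?thesis
    using comb H_tangent_ge[OF a] dPsi unfolding L_def[symmetric] by linarith
qed

lemma Psi_unseen_step_1: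
  fixes t :: nat assumes t1: "1 \<le> t"
  shows "ln (1 / real t + ln (real t + 1)) - 1 + 1/12 \<le> Psi 2 (t + 1) - Psi 1 t"
proof -
  define L where "L = ln (real t + 1)"
  have L23: "L \<ge> 2/3"
  proof -
    have "ln 2 \<le> L" using t1 by (simp add: L_def)
    then show ?thesis using ln_2_bounds by linarith
  qed
  have Lp: "L > 0" using L23 by simp
  have H: "H ((real t + 1) / 2) \<ge> 3/2 * ln L + 1/10"
  proof -
    have "xln1p (6/5) ((real t + 1) / 2 - 1) \<ge> 0" using t1 by (intro xln1p_nonneg) auto
    moreover have "ln (2 * ((real t + 1) / 2)) = L" by (simp add: L_def)
    ultimately show ?thesis by (simp add: H_def)
  qed
  have P2: "Psi 2 (t + 1) = 2 * H ((real t + 1) / 2) + 3/2"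
    by (simp add: Psi_def add.commute)
  have P1: "Psi 1 t \<le> 1/12 + 3/2 * ln L + 1" using Psi1_le[OF t1] by (simp add: Psi_def L_def)
  have a: "ln (1 / real t + L) \<le> ln (1 + L)"
    using t1 Lp by (intro ln_mono) (auto simp: add_pos_nonneg)
  have b: "ln (1 + L) - ln L \<le> ln 2 + 1/4"
  proof -
    have "(1 + L) / L \<le> 5/2" using L23 Lp by (simp add: field_simps)
    then have "ln ((1 + L) / L) \<le> ln (5/2)" using Lp by (intro ln_mono) auto
    moreover have "ln (5/2::real) = ln 2 + ln (5/4)"
    proof -
      have "ln (2 * (5/4::real)) = ln 2 + ln (5/4)" by (rule ln_mult_pos) auto
      moreover have "2 * (5/4::real) = 5/2" by simp
      ultimately show ?thesis by simp
    qed
    moreover have "ln (5/4::real) \<le> 1/4" using ln_le_minus_one[of "5/4"] by simp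
    moreover have "ln ((1 + L) / L) = ln (1 + L) - ln L" using Lp by (simp add: ln_div)
    ultimately show ?thesis by linarith
  qed
  have c: "ln L \<ge> - 1/2"
  proof -
    have "(L - 1) / L \<le> ln L - ln 1" by (rule ln_diff_ge) (use Lp in auto)
    moreover have "- 1/2 \<le> (L - 1) / L" using L23 Lp by (simp add: field_simps)
    ultimately show ?thesis by simp
  qed
  show ?thesis unfolding L_def[symmetric] using a b c H P1 P2 ln_2_bounds by linarith
qed

lemma Psi_seen_step:
  fixes k t :: nat assumes "1 \<le> k" "k \<le> t"
  shows "ln (1 + real k / (real t * ln ((real t + 1) / real k))) \<le> Psi k (t+1) - Psi k t"
proof (cases "k = 1")
  case True
  then have t1: "t \<ge> 1" using assms by simp
  have "Psi k (t+1) - Psi k t = ln (1 + 1 / (real t * ln (real t + 1)))"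
    using True Psi1_Suc[OF t1] by (simp add: Psi_def)
  then show ?thesis using True by simp
next
  case False
  then have k2: "2 \<le> k" using assms by simp
  have "Psi k (t+1) - Psi k t = real k * (H ((real t + 1) / real k) - H (real t / real k))"
    using k2 by (simp add: Psi_def algebra_simps add.commute)
  then show ?thesis using Psi_seen_step_ge_2[OF k2 assms(2)] by simp
qed

lemma Psi_unseen_step:
  fixes k t :: nat assumes "1 \<le> k" "k \<le> t"
  shows "ln (1 / real t + ln ((real t + 1) / real k) / real k) - 1 + 1/12 \<le> Psi (k+1) (t+1) - Psi k t"
proof (cases "k = 1")
  case True
  then show ?thesis using Psi_unseen_step_1[of t] assms by (simp add: numeral_2_eq_2)
next
  case False
  then have k2: "2 \<le> k" using assms by simp
  show ?thesis by (rule Psi_unseen_step_ge_2[OF k2 assms(2)])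
qed

lemma Psi_1_1: "1/12 \<le> Psi 1 1" by (simp add: Psi_def Psi1_def)

lemma Psi_le:
  fixes m n :: nat assumes m: "1 \<le> m" "m \<le> n"
  shows "Psi m n \<le> - (real m - 1) * ln (real m) + 3 / 2 * real m * ln (ln (2 * real n / real m))
           + 2.33 * real m + 0.86"
proof (cases "m = 1")
  case True
  then have n: "1 \<le> n" using m by simp
  then have "ln (real n + 1) \<le> ln (2 * real n)" "0 < ln (real n + 1)" by simp_all
  then have "ln (ln (real n + 1)) \<le> ln (ln (2 * real n))" by (rule ln_mono)
  then show ?thesis using True Psi1_le[OF n] by (simp add: Psi_def)
next
  case False
  define x where "x = real n / real m"
  have x: "1 \<le> x" "2 * x = 2 * real n / real m" using m by (simp_all add: x_def)
  have "H x \<le> 3/2 * ln (ln (2 * x)) + 1/10 + 6/5"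
    using xln1p_le[of "6/5" "x - 1"] x by (simp add: H_def)
  then have "real m * H x \<le> real m * (3/2 * ln (ln (2 * x)) + 1/10 + 6/5)"
    by (rule mult_left_mono) simp
  moreover have "(real m - 1) * ln (real m) - real m + 1 \<le> ln (fact (m - 1))"
    using ln_fact_eq[OF m(1)] ln_fact_ge[OF m(1)] by (simp add: algebra_simps)
  moreover have "Psi m n = - ln (fact (m - 1)) + real m * H x + 3/2"
    using False by (simp add: Psi_def x_def)
  ultimately show ?thesis using False m unfolding x(2) by (simp add: algebra_simps)
qed

theorem mainTheorem7:
  fixes u :: "'a::finite \<Rightarrow> real" and v :: "nat \<Rightarrow> real"
    and c :: "nat \<Rightarrow> real" and b0 :: real and xs :: "'a list"
  assumes u_pos: "\<And>i. u i > 0"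
    and v_pos: "\<And>k. v k > 0"
    and w_sum: "\<And>t. t \<le> length xs \<Longrightarrow>
                  (\<Sum>k\<in>UNIV - set (take t xs). wt u v xs t k) \<le> 1"
    and c_range: "\<And>t. t \<ge> 1 \<Longrightarrow> 1 \<le> c t \<and> c t \<le> 2"
    and b0_pos: "b0 > 0"
    and n_pos: "length xs \<ge> 1"
  shows "regret (beta_c b0 c xs) u v xs
           \<le> regret (beta_star b0 xs) u v xs + (real (card (set xs)) - 1) * ln 2
       \<and> regret (beta_c b0 c xs) u v xs
           \<le> CL u v xs - (real (card (set xs)) - 1) * ln (real (card (set xs)))
             + (\<Sum>j\<in>set xs. ln (real (count_list xs j)) / 2)
             - ln (real (length xs)) / 2
             + 3 / 2 * real (card (set xs))
                 * ln (ln (2 * real (length xs) / real (card (set xs))))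
             + 2.33 * real (card (set xs)) + 0.86
             + (real (card (set xs)) - 1) * ln 2"
proof -
  have ne: "xs \<noteq> []" using n_pos by auto
  have star_pos: "\<And>t. 0 < beta_star b0 xs t" using beta_star_pos[OF ne b0_pos] .
  have "beta_c b0 c xs t \<le> beta_star b0 xs t \<and> beta_star b0 xs t \<le> 2 * beta_c b0 c xs t"
    if "1 \<le> t" for t
    using c_range[OF that] star_pos[of t] that
    by (auto simp: beta_c_def divide_le_eq le_divide_eq mult.commute)
  moreover have "0 < beta_c b0 c xs t" for t
    using c_range[of t] star_pos[of t] b0_pos by (cases "t = 0") (simp_all add: beta_c_def)
  ultimately have part1: "regret (beta_c b0 c xs) u v xs
      \<le> regret (beta_star b0 xs) u v xs + (real (card (set xs)) - 1) * ln 2"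
    by (intro regret_le_of_beta_within_factor_2 u_pos v_pos star_pos ne)
  have "regret (beta_star b0 xs) u v xs \<le> CL u v xs + (\<Sum>j\<in>set xs. ln (real (count_list xs j)) / 2)
      - ln (real (length xs)) / 2 + Psi (card (set xs)) (length xs)"
    by (intro regret_beta_star_le_potential u_pos v_pos b0_pos ne Psi_seen_step Psi_unseen_step Psi_1_1)
  moreover have "Psi (card (set xs)) (length xs) \<le> - (real (card (set xs)) - 1) * ln (real (card (set xs)))
      + 3 / 2 * real (card (set xs)) * ln (ln (2 * real (length xs) / real (card (set xs))))
      + 2.33 * real (card (set xs)) + 0.86"
    using ne by (intro Psi_le card_length) (simp add: Suc_le_eq card_gt_0_iff)
  ultimately show ?thesis using part1 by linarith
qed

end
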